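(* Let $c\in\mathbb{R}$, let $I_c=[0,-1/c]$ if $c<0$ and $I_c=[0,+\infty)$ if $c\geq0$, and let $n>0$ be real with $n>c$ if $c\geq 0$, or $n=-cl$ for some $l\in\mathbb{N}$ if $c<0$. For $k\in\mathbb{N}_0$, $x\in I_c$ let $$p_{n,k}^{[c]}(x)=(-1)^k\binom{-n/c}{k}(cx)^k(1+cx)^{-\frac{n}{c}-k}\ (c\neq0),\qquad p_{n,k}^{[0]}(x)=\frac{(nx)^k}{k!}e^{-nx},$$ and let $T_{n,c}(x)=1-\sum_{k=0}^\infty\big(p_{n,k}^{[c]}(x)\big)^2$ (Tsallis entropy of order 2). Then: (i) $T_{n,c}$ is concave on $I_c$; for $c\geq 0$ it is increasing on $[0,+\infty)$; for $c<0$ it is increasing on $[0,-\frac{1}{2c}]$ and decreasing on $[-\frac{1}{2c},-\frac1c]$; (ii) $u=T_{n,c}$ satisfies on $I_c$ the equation $$x(1+cx)(1+2cx)u''(x)+\big(4(n+c)x(1+cx)+1\big)u'(x)+2n(1+2cx)u(x)=2n(1+2cx).$$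
   Context: For $\alpha\in\mathbb{R}$ and $k\in\mathbb{N}$, $\binom{\alpha}{k}=\frac{\alpha(\alpha-1)\cdots(\alpha-k+1)}{k!}$ and $\binom{\alpha}{0}=1$. *)

theory Defs
  imports "HOL-Analysis.Analysis"
begin

definition Ic :: "real \<Rightarrow> real set" where
  "Ic c = (if c < 0 then {0 .. -1/c} else {0..})"

text \<open>For c > 0 the base 1+cx is positive on I_c and
  the real power is used; for c < 0 the exponent -n/c - k = l - k is an integer and
  the integer power is used (so that the value at x = -1/c, where 1+cx = 0, is the
  usual polynomial value; note 0 powi 0 = 1).\<close>
definition p :: "real \<Rightarrow> real \<Rightarrow> nat \<Rightarrow> real \<Rightarrow> real" where
  "p n c k x =
     (if c = 0 then (n*x)^k / fact k * exp (- n*x)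
      else if c > 0 then (-1)^k * ((-n/c) gchoose k) * (c*x)^k * (1 + c*x) powr (-n/c - real k)
      else (-1)^k * ((-n/c) gchoose k) * (c*x)^k * (1 + c*x) powi (\<lfloor>-n/c\<rfloor> - int k))"

definition T :: "real \<Rightarrow> real \<Rightarrow> real \<Rightarrow> real" where
  "T n c x = 1 - (\<Sum>k. (p n c k x)^2)"

end

theory Submission
  imports Defs
begin

text \<open>For \<open>x \<in> Ic c\<close> the weights \<open>a\<^sub>k = p n c k x\<close> are nonnegative with generating function
  \<open>\<Sum>\<^sub>k a\<^sub>k z^k = (1 + cx - cxz) powr (-n/c)\<close> (\<open>exp (-nx(1 - z))\<close> if \<open>c = 0\<close>). Since
  \<open>\<bar>1 + cx - cx e^(it)\<bar>^2 = 1 + c x(1 + cx) \<bar>1 - e^(it)\<bar>^2\<close>, Parseval's identity writes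
  \<open>\<Sum>\<^sub>k a\<^sub>k^2\<close> as the mean over \<open>t\<close> of \<open>\<psi>(x(1 + cx) \<bar>1 - e^(it)\<bar>^2)\<close>, \<open>\<psi>(v) = (1 + cv) powr (-n/c)\<close>.
  Differentiating under the integral and using \<open>(1 + cv)\<psi>' = -n\<psi>\<close> and \<open>(1 + cv)\<psi>'' = -(n + c)\<psi>'\<close>,
  the left-hand side of the differential equation becomes the mean of an exact derivative
  \<open>(sin t \<cdot> g t)'\<close>, hence vanishes. Adding a multiple of another such derivative makes the
  integrand of the second derivative nonnegative, which gives concavity; the first derivative is
  \<open>1 + 2cx\<close> times a negative mean, which gives the monotonicity.\<close>

section \<open>Parseval's identity on the circle\<close>

definition circle_mean :: "(real \<Rightarrow> real) \<Rightarrow> real" where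
  "circle_mean f = integral {0..2*pi} f / (2*pi)"

lemma has_integral_cos_int_mult:
  fixes m :: int
  assumes "m \<noteq> 0"
  shows "((\<lambda>t. cos (of_int m * t)) has_integral 0) {0..2*pi}"
proof -
  have "((\<lambda>t. cos (of_int m * t)) has_integral
      sin (of_int m * (2*pi)) / of_int m - sin (of_int m * 0) / of_int m) {0..2*pi}"
    using assms
    by (intro fundamental_theorem_of_calculus)
       (auto intro!: derivative_eq_intros simp: has_real_derivative_iff_has_vector_derivative[symmetric])
  moreover have "sin (of_int m * (2*pi)) = 0"
    using sin_times_pi_eq_0[of "of_int (2*m)"] by (simp add: mult_ac)
  ultimately show ?thesis by simp
qed

lemma has_integral_cos_diff_mult:
  fixes j k :: nat
  shows "((\<lambda>t. cos ((real j - real k) * t)) has_integral (if j = k then 2*pi else 0)) {0..2*pi}"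
proof (cases "j = k")
  case True
  then show ?thesis using has_integral_const_real[of "1::real" 0 "2*pi"] by simp
next
  case False
  then show ?thesis using has_integral_cos_int_mult[of "int j - int k"] by simp
qed

lemma norm_sq_cis_sum:
  fixes a :: "nat \<Rightarrow> real"
  shows "(cmod (\<Sum>k<N. of_real (a k) * cis (real k * t)))^2
       = (\<Sum>j<N. \<Sum>k<N. a j * a k * cos ((real j - real k) * t))"
proof -
  let ?z = "\<Sum>k<N. of_real (a k) * cis (real k * t)"
  have "complex_of_real ((cmod ?z)^2) = ?z * cnj ?z" by (rule complex_norm_square)
  also have "\<dots> = (\<Sum>j<N. \<Sum>k<N. (of_real (a j) * cis (real j * t)) * (of_real (a k) * cis (- (real k * t))))"
    by (simp add: cis_cnj sum_product)
  also have "\<dots> = (\<Sum>j<N. \<Sum>k<N. of_real (a j * a k) * cis ((real j - real k) * t))"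
    by (intro sum.cong refl) (simp add: cis_mult algebra_simps)
  finally have "(cmod ?z)^2 = Re (\<Sum>j<N. \<Sum>k<N. of_real (a j * a k) * cis ((real j - real k) * t))"
    by (metis Re_complex_of_real)
  then show ?thesis by (simp add: Re_sum)
qed

lemma has_integral_norm_sq_cis_sum:
  fixes a :: "nat \<Rightarrow> real"
  shows "((\<lambda>t. (cmod (\<Sum>k<N. of_real (a k) * cis (real k * t)))^2) has_integral
           (2*pi * (\<Sum>k<N. (a k)^2))) {0..2*pi}"
proof -
  have "((\<lambda>t. \<Sum>j<N. \<Sum>k<N. a j * a k * cos ((real j - real k) * t)) has_integral
     (\<Sum>j<N. \<Sum>k<N. a j * a k * (if j = k then 2*pi else 0))) {0..2*pi}"
    by (intro has_integral_sum finite_lessThan has_integral_mult_right has_integral_cos_diff_mult)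
  also have "(\<Sum>j<N. \<Sum>k<N. a j * a k * (if j = k then 2*pi else 0)) = 2*pi * (\<Sum>k<N. (a k)^2)"
    by (simp add: sum_distrib_left power2_eq_square if_distrib mult_ac cong: if_cong)
  finally show ?thesis by (simp add: norm_sq_cis_sum)
qed

lemma sums_square_circle_mean:
  fixes a :: "nat \<Rightarrow> real" and F :: "real \<Rightarrow> complex"
  assumes summable: "summable (\<lambda>k. \<bar>a k\<bar>)"
    and sums: "\<And>t. (\<lambda>k. of_real (a k) * cis (real k * t)) sums F t"
  shows "(\<lambda>k. (a k)^2) sums circle_mean (\<lambda>t. (cmod (F t))^2)"
proof -
  define FN where "FN N t = (\<Sum>k<N. of_real (a k) * cis (real k * t) :: complex)" for N t
  have F_eq: "F = (\<lambda>t. \<Sum>k. of_real (a k) * cis (real k * t))"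
    using sums by (auto simp: sums_iff)
  have "uniform_limit {0..2*pi} FN F sequentially"
    unfolding FN_def F_eq by (rule Weierstrass_m_test[OF _ summable]) (simp add: norm_mult)
  then have lim_norm: "uniform_limit {0..2*pi} (\<lambda>N t. cmod (FN N t)) (\<lambda>t. cmod (F t)) sequentially"
    by (rule uniform_limit_norm)
  have "cmod (F t) \<le> (\<Sum>k. \<bar>a k\<bar>)" for t
    unfolding F_eq using summable by (intro summable_norm [THEN order_trans]) (simp_all add: norm_mult)
  then have bounded: "bounded ((\<lambda>t. cmod (F t)) ` {0..2*pi})"
    by (intro boundedI[where B = "\<Sum>k. \<bar>a k\<bar>"]) auto
  have "uniform_limit {0..2*pi} (\<lambda>N t. (cmod (FN N t))^2) (\<lambda>t. (cmod (F t))^2) sequentially"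
    using uniform_lim_mult[OF lim_norm lim_norm bounded bounded] by (simp add: power2_eq_square)
  then obtain I J where I: "\<And>N. ((\<lambda>t. (cmod (FN N t))^2) has_integral I N) {0..2*pi}"
      and J: "((\<lambda>t. (cmod (F t))^2) has_integral J) {0..2*pi}" and lim: "I \<longlonglongrightarrow> J"
    by (rule uniform_limit_integral) (auto simp: FN_def intro!: continuous_intros)
  have "I N = 2*pi * (\<Sum>k<N. (a k)^2)" for N
    using has_integral_unique[OF I[unfolded FN_def] has_integral_norm_sq_cis_sum] .
  then have "(\<lambda>N. \<Sum>k<N. (a k)^2) \<longlonglongrightarrow> J / (2*pi)"
    using tendsto_divide[OF lim tendsto_const[of "2*pi"]] by simp
  then show ?thesis
    unfolding sums_def circle_mean_def integral_unique[OF J] .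
qed

section \<open>Kernels and their circle means\<close>

definition quad_var :: "real \<Rightarrow> real \<Rightarrow> real" where
  "quad_var c x = x * (1 + c*x)"

text \<open>\<open>chord_sq t = \<bar>1 - e^(it)\<bar>^2\<close>.\<close>
definition chord_sq :: "real \<Rightarrow> real" where
  "chord_sq t = 2 * (1 - cos t)"

lemma chord_sq_nonneg: "0 \<le> chord_sq t"
  using cos_le_one[of t] by (simp add: chord_sq_def)

lemma chord_sq_le_4: "chord_sq t \<le> 4"
  using cos_ge_minus_one[of t] by (simp add: chord_sq_def del: cos_ge_minus_one)

lemma has_real_derivative_chord_sq: "(chord_sq has_real_derivative 2 * sin t) (at t)"
  unfolding chord_sq_def by (auto intro!: derivative_eq_intros)

lemma mem_Ic_iff: "x \<in> Ic c \<longleftrightarrow> 0 \<le> x \<and> 0 \<le> 1 + c*x"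
proof (cases "c < 0")
  case True
  then have "x \<le> -1/c \<longleftrightarrow> 0 \<le> 1 + c*x" by (auto simp: field_simps)
  then show ?thesis using True by (auto simp: Ic_def)
qed (auto simp: Ic_def)

lemma convex_Ic: "convex (Ic c)"
  by (auto simp: Ic_def)

lemma quad_var_nonneg: "x \<in> Ic c \<Longrightarrow> 0 \<le> quad_var c x"
  by (simp add: mem_Ic_iff quad_var_def)

lemma one_plus_4c_quad_var: "1 + 4*c * quad_var c x = (1 + 2*c*x)^2"
  by (simp add: quad_var_def power2_eq_square algebra_simps)

lemma one_plus_c_quad_var_mult:
  "1 + c * (quad_var c x * U) = (1 - U/4) + U/4 * (1 + 2*c*x)^2"
  unfolding quad_var_def by (simp add: field_simps power2_eq_square)

lemma one_plus_c_quad_var_mult_nonneg: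
  "0 \<le> U \<Longrightarrow> U \<le> 4 \<Longrightarrow> 0 \<le> 1 + c * (quad_var c x * U)"
  unfolding one_plus_c_quad_var_mult by (intro add_nonneg_nonneg) auto

lemma one_plus_c_quad_var_mult_pos:
  assumes "0 \<le> U" "U \<le> 4" "1 + 2*c*x \<noteq> 0"
  shows "0 < 1 + c * (quad_var c x * U)"
proof (cases "U = 4")
  case False
  then show ?thesis
    using assms unfolding one_plus_c_quad_var_mult by (intro add_pos_nonneg) auto
qed (use assms in \<open>simp add: one_plus_c_quad_var_mult\<close>)

lemma has_integral_sin_mult_deriv:
  assumes g': "\<And>t. (g has_real_derivative g' t) (at t)"
  shows "((\<lambda>t. cos t * g t + sin t * g' t) has_integral 0) {0..2*pi}"
proof -
  have "((\<lambda>t. sin t * g t) has_real_derivative cos t * g t + sin t * g' t) (at t)" for t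
    by (rule DERIV_cong[OF DERIV_mult'[OF DERIV_sin g']]) simp
  then have "((\<lambda>t. cos t * g t + sin t * g' t) has_integral sin (2*pi) * g (2*pi) - sin 0 * g 0) {0..2*pi}"
    by (intro fundamental_theorem_of_calculus)
       (auto simp: has_real_derivative_iff_has_vector_derivative[symmetric] intro: has_field_derivative_at_within)
  then show ?thesis by simp
qed

lemma has_real_derivative_circle_mean:
  assumes J: "open J" "convex J" "x \<in> J"
    and f': "\<And>x t. x \<in> J \<Longrightarrow> ((\<lambda>x. f x t) has_real_derivative f' x t) (at x)"
    and cont_f: "\<And>x. x \<in> J \<Longrightarrow> continuous_on {0..2*pi} (f x)"
    and cont_f': "continuous_on (J \<times> {0..2*pi}) (\<lambda>(x, t). f' x t)"
  shows "((\<lambda>x. circle_mean (f x)) has_real_derivative circle_mean (f' x)) (at x)"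
proof -
  have "((\<lambda>x. integral (cbox 0 (2*pi)) (f x)) has_field_derivative integral (cbox 0 (2*pi)) (f' x))
          (at x within J)"
  proof (rule leibniz_rule_field_derivative)
    show "((\<lambda>x. f x t) has_field_derivative f' x t) (at x within J)" if "x \<in> J" for x t
      using f'[OF that] by (rule has_field_derivative_at_within)
    show "f x integrable_on cbox 0 (2*pi)" if "x \<in> J" for x
      using cont_f[OF that] by (simp add: integrable_continuous_interval)
  qed (use J cont_f' in auto)
  then show ?thesis
    using at_within_open[OF J(3,1)] unfolding circle_mean_def by (intro DERIV_cdivide) simp
qed

text \<open>\<open>psi\<close> stands for \<open>v \<mapsto> (1 + cv) powr (-n/c)\<close> (\<open>exp (-nv)\<close> if \<open>c = 0\<close>); \<open>J\<close> and \<open>V\<close>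
  are open sets of admissible \<open>x\<close> and of admissible arguments of \<open>psi\<close>.\<close>
locale tsallis_kernel =
  fixes n c :: real and psi psi' psi'' :: "real \<Rightarrow> real" and J V :: "real set"
  assumes n_pos: "n > 0"
    and open_J: "open J" and convex_J: "convex J"
    and quad_var_mult_chord_sq_in_V: "x \<in> J \<Longrightarrow> quad_var c x * chord_sq t \<in> V"
    and has_deriv_psi: "v \<in> V \<Longrightarrow> (psi has_real_derivative psi' v) (at v)"
    and has_deriv_psi': "v \<in> V \<Longrightarrow> (psi' has_real_derivative psi'' v) (at v)"
    and continuous_on_psi'': "continuous_on V psi''"
    and psi'_eq: "v \<in> V \<Longrightarrow> (1 + c * v) * psi' v = - n * psi v"
    and psi''_eq: "v \<in> V \<Longrightarrow> (1 + c * v) * psi'' v = - (n + c) * psi' v"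
    and psi'_neg: "v \<in> V \<Longrightarrow> 0 < 1 + c * v \<Longrightarrow> psi' v < 0"
    and psi'_nonpos_psi''_nonneg: "v \<in> V \<Longrightarrow> 0 \<le> 1 + c * v \<Longrightarrow> psi' v \<le> 0 \<and> 0 \<le> psi'' v"
begin

definition kernel :: "real \<Rightarrow> real \<Rightarrow> real" where
  "kernel x t = psi (quad_var c x * chord_sq t)"

definition kernel_dx :: "real \<Rightarrow> real \<Rightarrow> real" where
  "kernel_dx x t = psi' (quad_var c x * chord_sq t) * chord_sq t * (1 + 2*c*x)"

definition kernel_dxx :: "real \<Rightarrow> real \<Rightarrow> real" where
  "kernel_dxx x t = psi'' (quad_var c x * chord_sq t) * (chord_sq t)^2 * (1 + 2*c*x)^2
     + psi' (quad_var c x * chord_sq t) * chord_sq t * (2*c)"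

definition collision :: "real \<Rightarrow> real" where
  "collision x = circle_mean (kernel x)"

definition collision' :: "real \<Rightarrow> real" where
  "collision' x = circle_mean (kernel_dx x)"

definition collision'' :: "real \<Rightarrow> real" where
  "collision'' x = circle_mean (kernel_dxx x)"

lemma collision_eq: "collision x = circle_mean (\<lambda>t. psi (quad_var c x * chord_sq t))"
  unfolding collision_def by (rule arg_cong[where f = circle_mean]) (simp add: kernel_def fun_eq_iff)

lemma continuous_on_psi: "continuous_on V psi"
  using has_deriv_psi by (intro continuous_at_imp_continuous_on) (meson DERIV_isCont)

lemma continuous_on_psi': "continuous_on V psi'"
  using has_deriv_psi' by (intro continuous_at_imp_continuous_on) (meson DERIV_isCont)

lemma continuous_on_comp_quad_var_chord_sq:
  assumes "continuous_on V f"
  shows "continuous_on (J \<times> S) (\<lambda>z. f (quad_var c (fst z) * chord_sq (snd z)))"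
proof (rule continuous_on_compose2[OF assms])
  show "continuous_on (J \<times> S) (\<lambda>z. quad_var c (fst z) * chord_sq (snd z))"
    unfolding quad_var_def chord_sq_def by (intro continuous_intros)
qed (auto simp: quad_var_mult_chord_sq_in_V)

lemma continuous_on_kernel: "continuous_on (J \<times> S) (\<lambda>(x, t). kernel x t)"
  using continuous_on_comp_quad_var_chord_sq[OF continuous_on_psi]
  by (simp add: kernel_def case_prod_unfold)

lemma continuous_on_kernel_dx: "continuous_on (J \<times> S) (\<lambda>(x, t). kernel_dx x t)"
  using continuous_on_comp_quad_var_chord_sq[OF continuous_on_psi']
  unfolding kernel_dx_def case_prod_unfold chord_sq_def by (intro continuous_intros)

lemma continuous_on_kernel_dxx: "continuous_on (J \<times> S) (\<lambda>(x, t). kernel_dxx x t)"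
  using continuous_on_comp_quad_var_chord_sq[OF continuous_on_psi']
    continuous_on_comp_quad_var_chord_sq[OF continuous_on_psi'']
  unfolding kernel_dxx_def case_prod_unfold chord_sq_def by (intro continuous_intros)

lemma continuous_on_slice:
  assumes "continuous_on (J \<times> S) (\<lambda>(x, t). f x t)" "x \<in> J"
  shows "continuous_on S (f x)"
proof -
  have "continuous_on S ((\<lambda>(x, t). f x t) \<circ> Pair x)"
    using assms by (intro continuous_on_compose continuous_intros) (auto intro: continuous_on_subset)
  then show ?thesis by (simp add: o_def)
qed

lemma has_integral_circle_mean:
  assumes "continuous_on (J \<times> {0..2*pi}) (\<lambda>(x, t). f x t)" "x \<in> J"
  shows "(f x has_integral 2*pi * circle_mean (f x)) {0..2*pi}"
  using continuous_on_slice[OF assms]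
  by (simp add: circle_mean_def integrable_continuous_interval integrable_integral)

lemma has_real_derivative_quad_var_mult:
  "((\<lambda>x. quad_var c x * U) has_real_derivative (1 + 2*c*x) * U) (at x)"
  unfolding quad_var_def by (auto intro!: derivative_eq_intros simp: algebra_simps)

lemma has_real_derivative_psi'_chord_sq:
  assumes "x \<in> J"
  shows "((\<lambda>t. psi' (quad_var c x * chord_sq t)) has_real_derivative
           psi'' (quad_var c x * chord_sq t) * (quad_var c x * (2 * sin t))) (at t)"
  by (rule DERIV_chain2[OF has_deriv_psi'])
     (auto simp: assms quad_var_mult_chord_sq_in_V intro!: derivative_eq_intros has_real_derivative_chord_sq)

lemma has_real_derivative_kernel:
  assumes "x \<in> J"
  shows "((\<lambda>x. kernel x t) has_real_derivative kernel_dx x t) (at x)"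
  unfolding kernel_def kernel_dx_def
  by (rule DERIV_cong[OF DERIV_chain2[OF has_deriv_psi has_real_derivative_quad_var_mult]])
     (simp_all add: quad_var_mult_chord_sq_in_V[OF assms])

lemma has_real_derivative_kernel_dx:
  assumes "x \<in> J"
  shows "((\<lambda>x. kernel_dx x t) has_real_derivative kernel_dxx x t) (at x)"
proof -
  have "((\<lambda>x. psi' (quad_var c x * chord_sq t)) has_real_derivative
          psi'' (quad_var c x * chord_sq t) * ((1 + 2*c*x) * chord_sq t)) (at x)"
    using DERIV_chain2[OF has_deriv_psi' has_real_derivative_quad_var_mult, of x "chord_sq t"]
    by (simp add: quad_var_mult_chord_sq_in_V[OF assms])
  then show ?thesis
    unfolding kernel_dx_def kernel_dxx_def
    by (auto intro!: derivative_eq_intros simp: power2_eq_square algebra_simps)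
qed

lemma has_real_derivative_collision:
  "x \<in> J \<Longrightarrow> (collision has_real_derivative collision' x) (at x)"
  unfolding collision_def[abs_def] collision'_def
  by (rule has_real_derivative_circle_mean[OF open_J convex_J _ has_real_derivative_kernel
        continuous_on_slice[OF continuous_on_kernel] continuous_on_kernel_dx])

lemma has_real_derivative_collision':
  "x \<in> J \<Longrightarrow> (collision' has_real_derivative collision'' x) (at x)"
  unfolding collision'_def[abs_def] collision''_def
  by (rule has_real_derivative_circle_mean[OF open_J convex_J _ has_real_derivative_kernel_dx
        continuous_on_slice[OF continuous_on_kernel_dx] continuous_on_kernel_dxx])

end

lemma ode_integrand_identity:
  fixes n c x t P P1 P2 :: real
  defines "Y \<equiv> quad_var c x" and "U \<equiv> chord_sq t" and "w \<equiv> 1 + 2*c*x"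
  assumes eq1: "(1 + c * (Y*U)) * P1 = - n * P"
    and eq2: "(1 + c * (Y*U)) * P2 = - (n + c) * P1"
  shows "Y * w * (P2 * U^2 * w^2 + P1 * U * (2*c)) + (4*(n + c)*Y + 1) * (P1 * U * w) + 2*n*w*P
       = cos t * (-2*w*P1) + sin t * (-2*w * (P2 * (Y * (2 * sin t))))"
proof -
  have e1: "(1 + c * (Y*U)) * P1 + n * P = 0" using eq1 by simp
  have e2: "(1 + c * (Y*U)) * P2 + (n + c) * P1 = 0" using eq2 by (simp add: algebra_simps)
  have "Y * w * (P2 * U^2 * w^2 + P1 * U * (2*c)) + (4*(n + c)*Y + 1) * (P1 * U * w) + 2*n*w*P
       - (cos t * (-2*w*P1) + sin t * (-2*w * (P2 * (Y * (2 * sin t)))))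
     = w * (4*Y*U * ((1 + c * (Y*U)) * P2 + (n + c) * P1) + 2 * ((1 + c * (Y*U)) * P1 + n * P)
         + 4*Y*P2 * ((sin t)^2 + (cos t)^2 - 1))"
    unfolding Y_def U_def w_def quad_var_def chord_sq_def by algebra
  also have "\<dots> = 0" by (simp only: e1 e2 sin_cos_squared_add) simp
  finally show ?thesis by simp
qed

lemma convexity_integrand_identity:
  fixes c x t P1 P2 :: real
  defines "Y \<equiv> quad_var c x" and "U \<equiv> chord_sq t" and "w \<equiv> 1 + 2*c*x"
  shows "P2 * U^2 * w^2 + P1 * U * (2*c)
         + (-2*c/3) * (cos t * (U * P1) + sin t * (2 * sin t * P1 + U * (P2 * (Y * (2 * sin t)))))
       = U^2 * (P2 * (1 + c*Y * (8 + U)/3) + (2*c/3) * P1)"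
proof -
  have "P2 * U^2 * w^2 + P1 * U * (2*c)
         + (-2*c/3) * (cos t * (U * P1) + sin t * (2 * sin t * P1 + U * (P2 * (Y * (2 * sin t)))))
       = U^2 * (P2 * (1 + c*Y * (8 + U)/3) + (2*c/3) * P1)
         - (4*c/3) * (P1 + Y*U*P2) * ((sin t)^2 + (cos t)^2 - 1)"
    unfolding Y_def U_def w_def quad_var_def chord_sq_def by algebra
  then show ?thesis by simp
qed

context tsallis_kernel
begin

lemma collision_ode:
  assumes x: "x \<in> J"
  shows "quad_var c x * (1 + 2*c*x) * collision'' x + (4*(n + c) * quad_var c x + 1) * collision' x
           + 2*n*(1 + 2*c*x) * collision x = 0"
proof -
  define Y w where "Y = quad_var c x" and "w = 1 + 2*c*x"
  define g g' where "g t = -2*w * psi' (Y * chord_sq t)"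
    and "g' t = -2*w * (psi'' (Y * chord_sq t) * (Y * (2 * sin t)))" for t
  have "(g has_real_derivative g' t) (at t)" for t
    unfolding g_def g'_def Y_def
    by (intro DERIV_cmult has_real_derivative_psi'_chord_sq x)
  then have exact: "((\<lambda>t. cos t * g t + sin t * g' t) has_integral 0) {0..2*pi}"
    by (rule has_integral_sin_mult_deriv)
  have "Y*w * kernel_dxx x t + (4*(n + c)*Y + 1) * kernel_dx x t + 2*n*w * kernel x t
      = cos t * g t + sin t * g' t" for t
    unfolding kernel_def kernel_dx_def kernel_dxx_def g_def g'_def Y_def w_def
    using psi'_eq psi''_eq quad_var_mult_chord_sq_in_V[OF x]
    by (intro ode_integrand_identity) auto
  then have integrand: "(\<lambda>t. Y*w * kernel_dxx x t + (4*(n + c)*Y + 1) * kernel_dx x t + 2*n*w * kernel x t)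
      = (\<lambda>t. cos t * g t + sin t * g' t)"
    by (rule ext)
  have "((\<lambda>t. Y*w * kernel_dxx x t + (4*(n + c)*Y + 1) * kernel_dx x t + 2*n*w * kernel x t)
      has_integral Y*w * (2*pi * collision'' x) + (4*(n + c)*Y + 1) * (2*pi * collision' x)
        + 2*n*w * (2*pi * collision x)) {0..2*pi}"
    unfolding collision_def collision'_def collision''_def
    by (intro has_integral_add has_integral_mult_right x has_integral_circle_mean
          continuous_on_kernel continuous_on_kernel_dx continuous_on_kernel_dxx)
  then have "Y*w * (2*pi * collision'' x) + (4*(n + c)*Y + 1) * (2*pi * collision' x)
        + 2*n*w * (2*pi * collision x) = 0"
    using exact unfolding integrand by (rule has_integral_unique)
  then have "2*pi * (Y*w * collision'' x + (4*(n + c)*Y + 1) * collision' x + 2*n*w * collision x) = 0"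
    by (simp add: algebra_simps)
  then show ?thesis unfolding Y_def w_def by simp
qed

lemma convexity_integrand_nonneg:
  assumes x: "x \<in> Ic c" and U: "0 \<le> U" "U \<le> 4" and V: "quad_var c x * U \<in> V"
  shows "0 \<le> psi'' (quad_var c x * U) * (1 + c * quad_var c x * (8 + U)/3)
              + (2*c/3) * psi' (quad_var c x * U)"
proof -
  define Y P1 P2 where "Y = quad_var c x" and "P1 = psi' (Y*U)" and "P2 = psi'' (Y*U)"
  have Y: "0 \<le> Y" using x by (simp add: Y_def quad_var_nonneg)
  have "0 \<le> 1 + c * (Y*U)" using U by (simp add: Y_def one_plus_c_quad_var_mult_nonneg)
  then have P: "P1 \<le> 0" "0 \<le> P2"
    using psi'_nonpos_psi''_nonneg V by (auto simp: P1_def P2_def Y_def)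
  have "0 \<le> P2 * (1 + c*Y * (8 + U)/3) + (2*c/3) * P1"
  proof (cases c "0::real" rule: linorder_cases)
    case less
    have "c*Y * 4 \<le> c*Y * ((8 + U)/3)"
      using less Y U by (intro mult_left_mono_neg) (auto simp: mult_nonpos_nonneg)
    moreover have "0 \<le> 1 + 4*c*Y" by (simp add: Y_def one_plus_4c_quad_var)
    ultimately have "0 \<le> 1 + c*Y * (8 + U)/3" by simp
    then show ?thesis using less P by (simp add: mult_nonpos_nonpos)
  next
    case greater
    define A B where "A = 1 + c*Y * (8 + U)/3" and "B = 1 + c * (Y*U)"
    have B: "0 < B" using greater Y U by (simp add: B_def add_pos_nonneg)
    have "c*Y * U \<le> c*Y * ((8 + U)/3)"
      using greater Y U by (intro mult_left_mono) auto
    then have "B \<le> A" by (simp add: A_def B_def mult.assoc)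
    then have "(2*c/3) * B \<le> (n + c) * A"
      using greater n_pos B by (intro mult_mono) auto
    then have "0 \<le> (- P1) * ((n + c) * A - (2*c/3) * B)"
      using P by (intro mult_nonneg_nonneg) auto
    also have "\<dots> = - (n + c) * P1 * A + (2*c/3) * P1 * B" by (simp add: algebra_simps)
    also have "- (n + c) * P1 = B * P2"
      using psi''_eq[OF V] by (simp add: B_def P1_def P2_def Y_def)
    also have "B * P2 * A + (2*c/3) * P1 * B = B * (P2 * A + (2*c/3) * P1)"
      by (simp add: algebra_simps)
    finally show ?thesis using B by (simp add: A_def zero_le_mult_iff)
  qed (use P in simp)
  then show ?thesis by (simp add: P1_def P2_def Y_def)
qed

text \<open>Adding the exact derivative \<open>-2c/3 \<cdot> (sin t \<cdot> chord_sq t \<cdot> \<psi>'(\<dots>))'\<close>, which has mean zero,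
  turns \<open>kernel_dxx\<close> into a nonnegative integrand.\<close>
lemma collision''_nonneg:
  assumes x: "x \<in> J" "x \<in> Ic c"
  shows "0 \<le> collision'' x"
proof -
  define Y where "Y = quad_var c x"
  define g g' where "g t = chord_sq t * psi' (Y * chord_sq t)"
    and "g' t = 2 * sin t * psi' (Y * chord_sq t) + chord_sq t * (psi'' (Y * chord_sq t) * (Y * (2 * sin t)))"
    for t
  have "(g has_real_derivative g' t) (at t)" for t
    unfolding g_def g'_def Y_def
    by (rule DERIV_cong[OF DERIV_mult'[OF has_real_derivative_chord_sq has_real_derivative_psi'_chord_sq[OF x(1)]]])
       simp
  then have exact: "((\<lambda>t. cos t * g t + sin t * g' t) has_integral 0) {0..2*pi}"
    by (rule has_integral_sin_mult_deriv)
  have "((\<lambda>t. kernel_dxx x t + (-2*c/3) * (cos t * g t + sin t * g' t)) has_integral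
          2*pi * collision'' x + (-2*c/3) * 0) {0..2*pi}"
    unfolding collision''_def
    by (intro has_integral_add has_integral_mult_right exact has_integral_circle_mean
          continuous_on_kernel_dxx x)
  moreover have "0 \<le> kernel_dxx x t + (-2*c/3) * (cos t * g t + sin t * g' t)" for t
  proof -
    have "kernel_dxx x t + (-2*c/3) * (cos t * g t + sin t * g' t)
        = (chord_sq t)^2 * (psi'' (Y * chord_sq t) * (1 + c*Y * (8 + chord_sq t)/3)
            + (2*c/3) * psi' (Y * chord_sq t))"
      unfolding kernel_dxx_def g_def g'_def Y_def by (rule convexity_integrand_identity)
    also have "0 \<le> \<dots>"
      using convexity_integrand_nonneg[OF x(2) chord_sq_nonneg chord_sq_le_4
          quad_var_mult_chord_sq_in_V[OF x(1)]]
      by (simp add: Y_def)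
    finally show ?thesis .
  qed
  ultimately have "0 \<le> 2*pi * collision'' x + (-2*c/3) * 0" by (rule has_integral_nonneg)
  then show ?thesis using pi_gt_zero by (simp add: zero_le_mult_iff)
qed

definition slope :: "real \<Rightarrow> real" where
  "slope x = circle_mean (\<lambda>t. psi' (quad_var c x * chord_sq t) * chord_sq t)"

lemma collision'_eq_slope: "collision' x = (1 + 2*c*x) * slope x"
proof -
  have "kernel_dx x = (\<lambda>t. psi' (quad_var c x * chord_sq t) * chord_sq t * (1 + 2*c*x))"
    by (simp add: kernel_dx_def fun_eq_iff)
  then show ?thesis by (simp add: collision'_def slope_def circle_mean_def integral_mult_left)
qed

lemma slope_neg:
  assumes x: "x \<in> J" and w: "1 + 2*c*x \<noteq> 0"
  shows "slope x < 0"
proof -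
  define g where "g t = - (psi' (quad_var c x * chord_sq t) * chord_sq t)" for t
  have "continuous_on {0..2*pi} (\<lambda>t. quad_var c x * chord_sq t)"
    unfolding chord_sq_def by (intro continuous_intros)
  then have "continuous_on {0..2*pi} (\<lambda>t. psi' (quad_var c x * chord_sq t))"
    by (rule continuous_on_compose2[OF continuous_on_psi']) (auto simp: quad_var_mult_chord_sq_in_V[OF x])
  then have cont: "continuous_on (cbox 0 (2*pi)) g"
    unfolding g_def cbox_interval chord_sq_def by (intro continuous_intros)
  have g_nonneg: "0 \<le> g t" for t
  proof -
    have "0 \<le> 1 + c * (quad_var c x * chord_sq t)"
      by (intro one_plus_c_quad_var_mult_nonneg chord_sq_nonneg chord_sq_le_4)
    then show ?thesis
      using psi'_nonpos_psi''_nonneg[OF quad_var_mult_chord_sq_in_V[OF x]] chord_sq_nonneg[of t]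
      by (auto simp: g_def mult_nonpos_nonneg)
  qed
  have "0 < 1 + c * (quad_var c x * chord_sq pi)"
    using w by (intro one_plus_c_quad_var_mult_pos) (auto simp: chord_sq_def)
  then have "psi' (quad_var c x * chord_sq pi) < 0"
    by (rule psi'_neg[OF quad_var_mult_chord_sq_in_V[OF x]])
  then have "0 < g pi" by (simp add: g_def chord_sq_def)
  then have "integral (cbox 0 (2*pi)) g \<noteq> 0"
    using integral_cbox_eq_0_iff[OF cont] g_nonneg pi_gt_zero
    by (auto simp: cbox_interval box_real)
  moreover have "0 \<le> integral (cbox 0 (2*pi)) g"
    using g_nonneg cont by (intro integral_nonneg integrable_continuous) auto
  ultimately have "0 < integral {0..2*pi} g" by (simp add: cbox_interval)
  then show ?thesis
    unfolding slope_def circle_mean_def g_def integral_neg by (simp add: divide_neg_pos)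
qed

end

section \<open>Tsallis entropy from a kernel representation\<close>

lemma convex_on_cong:
  assumes "\<And>x. x \<in> S \<Longrightarrow> f x = g x"
  shows "convex_on S f \<longleftrightarrow> convex_on S g"
  unfolding convex_on_def using assms convexD[of S] by (metis (no_types, lifting))

locale tsallis_representation = tsallis_kernel +
  assumes Ic_subset_J: "Ic c \<subseteq> J"
    and sums_p_sq: "x \<in> Ic c \<Longrightarrow> (\<lambda>k. (p n c k x)^2) sums collision x"
begin

lemma T_eq: "x \<in> Ic c \<Longrightarrow> T n c x = 1 - collision x"
  using sums_p_sq by (simp add: T_def sums_iff)

lemma concave_on_T: "concave_on (Ic c) (T n c)"
proof -
  have "convex_on (Ic c) (\<lambda>x. collision x - 1)"
  proof (rule f''_ge0_imp_convex[OF convex_Ic])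
    fix x assume x: "x \<in> Ic c"
    then have J: "x \<in> J" using Ic_subset_J by auto
    show "((\<lambda>x. collision x - 1) has_real_derivative collision' x) (at x)"
      using DERIV_diff[OF has_real_derivative_collision[OF J] DERIV_const] by simp
    show "(collision' has_real_derivative collision'' x) (at x)"
      using J by (rule has_real_derivative_collision')
    show "0 \<le> collision'' x"
      using J x by (rule collision''_nonneg)
  qed
  moreover have "convex_on (Ic c) (\<lambda>x. - T n c x) \<longleftrightarrow> convex_on (Ic c) (\<lambda>x. collision x - 1)"
    by (rule convex_on_cong) (simp add: T_eq)
  ultimately show ?thesis unfolding concave_on_def by simp
qed

lemma continuous_on_collision: "S \<subseteq> J \<Longrightarrow> continuous_on S collision"
  by (meson DERIV_isCont continuous_at_imp_continuous_on has_real_derivative_collision subsetD)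

lemma has_real_derivative_one_minus_collision:
  assumes "x \<in> J"
  shows "((\<lambda>x. 1 - collision x) has_real_derivative - ((1 + 2*c*x) * slope x)) (at x)"
  using DERIV_diff[OF DERIV_const has_real_derivative_collision[OF assms]]
  by (simp add: collision'_eq_slope)

lemma T_strict_increasing:
  assumes "r < s" "{r..s} \<subseteq> Ic c" and pos: "\<And>x. r < x \<Longrightarrow> x < s \<Longrightarrow> 0 < 1 + 2*c*x"
  shows "T n c r < T n c s"
proof -
  have "1 - collision r < 1 - collision s"
  proof (rule DERIV_pos_imp_increasing_open[OF \<open>r < s\<close>])
    fix x assume x: "r < x" "x < s"
    then have "x \<in> {r..s}" by simp
    then have J: "x \<in> J" using assms(2) Ic_subset_J by blast
    have "slope x < 0" using J pos[OF x] by (intro slope_neg) auto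
    with pos[OF x] have "(1 + 2*c*x) * slope x < 0" by (rule mult_pos_neg)
    then show "\<exists>y. ((\<lambda>x. 1 - collision x) has_real_derivative y) (at x) \<and> 0 < y"
      using has_real_derivative_one_minus_collision[OF J] by auto
  qed (use assms Ic_subset_J in \<open>auto intro!: continuous_intros continuous_on_collision\<close>)
  moreover have "r \<in> Ic c" "s \<in> Ic c" using assms(1,2) by auto
  ultimately show ?thesis by (simp add: T_eq)
qed

lemma T_strict_decreasing:
  assumes "r < s" "{r..s} \<subseteq> Ic c" and neg: "\<And>x. r < x \<Longrightarrow> x < s \<Longrightarrow> 1 + 2*c*x < 0"
  shows "T n c s < T n c r"
proof -
  have "1 - collision s < 1 - collision r"
  proof (rule DERIV_neg_imp_decreasing_open[OF \<open>r < s\<close>])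
    fix x assume x: "r < x" "x < s"
    then have "x \<in> {r..s}" by simp
    then have J: "x \<in> J" using assms(2) Ic_subset_J by blast
    have "slope x < 0" using J neg[OF x] by (intro slope_neg) auto
    with neg[OF x] have "0 < (1 + 2*c*x) * slope x" by (rule mult_neg_neg)
    then show "\<exists>y. ((\<lambda>x. 1 - collision x) has_real_derivative y) (at x) \<and> y < 0"
      using has_real_derivative_one_minus_collision[OF J] by auto
  qed (use assms Ic_subset_J in \<open>auto intro!: continuous_intros continuous_on_collision\<close>)
  moreover have "r \<in> Ic c" "s \<in> Ic c" using assms(1,2) by auto
  ultimately show ?thesis by (simp add: T_eq)
qed

lemma strict_mono_on_T:
  assumes "0 \<le> c"
  shows "strict_mono_on {0..} (T n c)"
proof (rule monotone_onI)
  fix r s :: real assume "r \<in> {0..}" "s \<in> {0..}" "r < s"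
  then show "T n c r < T n c s"
    using assms by (intro T_strict_increasing) (auto simp: Ic_def intro: add_pos_nonneg)
qed

lemma strict_mono_on_T_neg:
  assumes "c < 0"
  shows "strict_mono_on {0 .. -1/(2*c)} (T n c)"
    and "strict_antimono_on {-1/(2*c) .. -1/c} (T n c)"
proof -
  have sign: "0 < 1 + 2*c*x \<longleftrightarrow> x < -1/(2*c)" "1 + 2*c*x < 0 \<longleftrightarrow> -1/(2*c) < x" for x
    using assms by (auto simp: field_simps)
  have "-1/(2*c) \<le> -1/c" using assms by (simp add: divide_simps)
  then have Ic: "{0 .. -1/(2*c)} \<subseteq> Ic c" "{-1/(2*c) .. -1/c} \<subseteq> Ic c"
    using assms by (auto simp: Ic_def divide_simps)
  show "strict_mono_on {0 .. -1/(2*c)} (T n c)"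
  proof (rule monotone_onI)
    fix r s assume rs: "r \<in> {0 .. -1/(2*c)}" "s \<in> {0 .. -1/(2*c)}" "r < s"
    have "{r..s} \<subseteq> Ic c" using rs by (intro order_trans[OF _ Ic(1)]) auto
    moreover have "0 < 1 + 2*c*x" if "x < s" for x
      using that rs(2) sign(1) by auto
    ultimately show "T n c r < T n c s" using rs(3) by (intro T_strict_increasing)
  qed
  show "strict_antimono_on {-1/(2*c) .. -1/c} (T n c)"
  proof (rule monotone_onI)
    fix r s assume rs: "r \<in> {-1/(2*c) .. -1/c}" "s \<in> {-1/(2*c) .. -1/c}" "r < s"
    have "{r..s} \<subseteq> Ic c" using rs by (intro order_trans[OF _ Ic(2)]) auto
    moreover have "1 + 2*c*x < 0" if "r < x" for x
      using that rs(1) sign(2) by auto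
    ultimately show "T n c s < T n c r" using rs(3) by (intro T_strict_decreasing)
  qed
qed

lemma T_ode:
  "\<exists>u1 u2. \<forall>x\<in>Ic c.
      (T n c has_real_derivative u1 x) (at x within Ic c)
    \<and> (u1 has_real_derivative u2 x) (at x within Ic c)
    \<and> x*(1+c*x)*(1+2*c*x) * u2 x + (4*(n+c)*x*(1+c*x) + 1) * u1 x
        + 2*n*(1+2*c*x) * T n c x = 2*n*(1+2*c*x)"
proof (intro exI ballI conjI)
  fix x assume x: "x \<in> Ic c"
  then have J: "x \<in> J" using Ic_subset_J by auto
  have "((\<lambda>x. 1 - collision x) has_real_derivative - collision' x) (at x)"
    using DERIV_diff[OF DERIV_const has_real_derivative_collision[OF J]] by simp
  then show "(T n c has_real_derivative - collision' x) (at x within Ic c)"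
    by (rule has_field_derivative_transform_within[OF has_field_derivative_at_within zero_less_one x])
       (simp add: T_eq)
  show "((\<lambda>x. - collision' x) has_real_derivative - collision'' x) (at x within Ic c)"
    using DERIV_minus[OF has_real_derivative_collision'[OF J]] by (rule has_field_derivative_at_within)
  have "x*(1+c*x)*(1+2*c*x) * - collision'' x + (4*(n+c)*x*(1+c*x) + 1) * - collision' x
      + 2*n*(1+2*c*x) * (1 - collision x)
      = 2*n*(1+2*c*x) - (quad_var c x * (1 + 2*c*x) * collision'' x
          + (4*(n + c) * quad_var c x + 1) * collision' x + 2*n*(1 + 2*c*x) * collision x)"
    unfolding quad_var_def by algebra
  then show "x*(1+c*x)*(1+2*c*x) * - collision'' x + (4*(n+c)*x*(1+c*x) + 1) * - collision' x
      + 2*n*(1+2*c*x) * T n c x = 2*n*(1+2*c*x)"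
    unfolding T_eq[OF x] collision_ode[OF J] by simp
qed

end

section \<open>The three kernels\<close>

lemma power_of_real_mult_cis:
  "(of_real r * cis t) ^ k = of_real (r ^ k) * cis (real k * t)"
  by (simp add: power_mult_distrib Complex.DeMoivre)

lemma norm_sq_affine_cis:
  "(cmod (of_real (1 + c*x) - of_real (c*x) * cis t))^2 = 1 + c * (quad_var c x * chord_sq t)"
proof -
  have "(cmod (of_real (1 + c*x) - of_real (c*x) * cis t))^2 = (1 + c*x - c*x * cos t)^2 + (c*x * sin t)^2"
    by (simp add: cmod_power2)
  also have "\<dots> = 1 + c * (quad_var c x * chord_sq t) + (c*x)^2 * ((sin t)^2 + (cos t)^2 - 1)"
    unfolding quad_var_def chord_sq_def by algebra
  finally show ?thesis by simp
qed

lemma tsallis_kernel_exp: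
  assumes "0 < n"
  shows "tsallis_kernel n 0 (\<lambda>v. exp (- n * v)) (\<lambda>v. - n * exp (- n * v)) (\<lambda>v. n^2 * exp (- n * v))
           UNIV UNIV"
  using assms by unfold_locales (auto intro!: derivative_eq_intros continuous_intros simp: power2_eq_square)

lemma sums_p_sq_exp:
  assumes "0 < n" "0 \<le> x"
  shows "(\<lambda>k. (p n 0 k x)^2) sums circle_mean (\<lambda>t. exp (- n * (quad_var 0 x * chord_sq t)))"
proof -
  define a where "a k = (n*x)^k / fact k * exp (- n*x)" for k
  define F where "F t = of_real (exp (- n*x)) * exp (of_real (n*x) * cis t)" for t
  have "summable (\<lambda>k. (n*x)^k / fact k)"
    using summable_exp[of "n*x"] by (simp add: field_simps)
  then have "summable a"
    unfolding a_def by (rule summable_mult2)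
  moreover have "0 \<le> a k" for k
    using assms by (simp add: a_def)
  ultimately have "summable (\<lambda>k. \<bar>a k\<bar>)" by simp
  moreover have "(\<lambda>k. of_real (a k) * cis (real k * t)) sums F t" for t
  proof -
    have "(\<lambda>k. of_real (exp (- n*x)) * ((of_real (n*x) * cis t)^k /\<^sub>R fact k)) sums F t"
      unfolding F_def by (intro sums_mult exp_converges)
    then show ?thesis
      unfolding power_of_real_mult_cis by (simp add: a_def scaleR_conv_of_real field_simps)
  qed
  ultimately have "(\<lambda>k. (a k)^2) sums circle_mean (\<lambda>t. (cmod (F t))^2)"
    by (rule sums_square_circle_mean)
  moreover have "(cmod (F t))^2 = exp (- n * (quad_var 0 x * chord_sq t))" for t
  proof -
    have "cmod (F t) = exp (- n*x) * exp (n*x * cos t)"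
      by (simp add: F_def norm_mult norm_exp_eq_Re)
    also have "\<dots> = exp (- n*x + n*x * cos t)" by (simp only: exp_add)
    finally have "cmod (F t) = exp (- n*x + n*x * cos t)" .
    then show ?thesis
      by (simp add: power2_eq_square exp_add[symmetric] quad_var_def chord_sq_def algebra_simps)
  qed
  ultimately show ?thesis by (simp add: a_def p_def)
qed

lemma tsallis_representation_exp:
  assumes "0 < n"
  shows "tsallis_representation n 0 (\<lambda>v. exp (- n * v)) (\<lambda>v. - n * exp (- n * v))
           (\<lambda>v. n^2 * exp (- n * v)) UNIV UNIV"
proof -
  note kernel = tsallis_kernel_exp[OF assms]
  show ?thesis
    using kernel
  proof (rule tsallis_representation.intro, unfold_locales)
    fix x assume "x \<in> Ic 0"
    then show "(\<lambda>k. (p n 0 k x)^2) sums tsallis_kernel.collision 0 (\<lambda>v. exp (- n * v)) x"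
      unfolding tsallis_kernel.collision_eq[OF kernel] using sums_p_sq_exp[OF assms, of x]
      by (simp add: Ic_def)
  qed simp
qed

lemma tsallis_kernel_powr:
  assumes "0 < n" "0 < c"
  shows "tsallis_kernel n c (\<lambda>v. (1 + c * v) powr (- n/c)) (\<lambda>v. - n * (1 + c * v) powr (- n/c - 1))
           (\<lambda>v. n * (n + c) * (1 + c * v) powr (- n/c - 2)) {x. 0 < 1 + 2*c*x} {v. 0 < 1 + c * v}"
proof
  have "{x. 0 < 1 + 2*c*x} = {-1/(2*c)<..}" using assms by (auto simp: field_simps)
  then show "convex {x. 0 < 1 + 2*c*x}" by (simp add: convex_real_interval)
  fix x t assume "x \<in> {x. 0 < 1 + 2*c*x}"
  then show "quad_var c x * chord_sq t \<in> {v. 0 < 1 + c * v}"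
    by (auto intro!: one_plus_c_quad_var_mult_pos chord_sq_nonneg chord_sq_le_4)
next
  fix v assume "v \<in> {v. 0 < 1 + c * v}"
  then have v: "0 < 1 + c * v" by simp
  have pw: "(1 + c * v) * (1 + c * v) powr (a - 1) = (1 + c * v) powr a" for a
    using v by (simp add: powr_mult_base)
  show "((\<lambda>v. (1 + c * v) powr (- n/c)) has_real_derivative - n * (1 + c * v) powr (- n/c - 1)) (at v)"
    using v assms by (auto intro!: derivative_eq_intros)
  show "((\<lambda>v. - n * (1 + c * v) powr (- n/c - 1)) has_real_derivative n * (n + c) * (1 + c * v) powr (- n/c - 2)) (at v)"
    using v assms by (auto intro!: derivative_eq_intros simp: field_simps)
  show "(1 + c * v) * (- n * (1 + c * v) powr (- n/c - 1)) = - n * (1 + c * v) powr (- n/c)"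
    using pw[of "- n/c"] by (simp add: algebra_simps)
  show "(1 + c * v) * (n * (n + c) * (1 + c * v) powr (- n/c - 2)) = - (n + c) * (- n * (1 + c * v) powr (- n/c - 1))"
    using pw[of "- n/c - 1"] by (simp add: algebra_simps)
  show "- n * (1 + c * v) powr (- n/c - 1) < 0"
    using assms v by simp
  show "- n * (1 + c * v) powr (- n/c - 1) \<le> 0 \<and> 0 \<le> n * (n + c) * (1 + c * v) powr (- n/c - 2)"
    using assms by simp
next
  show "continuous_on {v. 0 < 1 + c * v} (\<lambda>v. n * (n + c) * (1 + c * v) powr (- n/c - 2))"
    by (intro continuous_intros) auto
qed (use assms in \<open>auto intro!: open_Collect_less continuous_intros\<close>)

lemma power2_powr: "(r powr a)^2 = (r^2) powr a" for r :: real
  unfolding power2_eq_square powr_mult ..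

lemma neg_one_power_mult_gbinomial_nonneg:
  fixes m :: real
  assumes "0 < m"
  shows "0 \<le> (-1)^k * ((- m) gchoose k)"
proof -
  have "(-1)^k * ((- m) gchoose k) = ((m + of_nat k - 1) gchoose k)"
    by (simp add: gbinomial_minus mult.assoc flip: power_mult_distrib)
  also have "\<dots> = pochhammer m k / fact k" by (simp add: gbinomial_pochhammer')
  finally show ?thesis using pochhammer_pos[OF assms, of k] by simp
qed

lemma p_eq_gbinomial_term:
  assumes "0 < c" and cx: "0 < 1 + c*x"
  shows "p n c k x = (1 + c*x) powr (- n/c) * (((- n/c) gchoose k) * (- (c*x / (1 + c*x)))^k)"
proof -
  have "p n c k x = (-1)^k * ((- n/c) gchoose k) * (c*x)^k * (1 + c*x) powr (- n/c - real k)"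
    using assms by (simp add: p_def)
  also have "(1 + c*x) powr (- n/c - real k) = (1 + c*x) powr (- n/c) / (1 + c*x)^k"
    unfolding powr_diff powr_realpow[OF cx] ..
  also have "(-1)^k * ((- n/c) gchoose k) * (c*x)^k * ((1 + c*x) powr (- n/c) / (1 + c*x)^k)
      = (1 + c*x) powr (- n/c) * (((- n/c) gchoose k) * ((-1)^k * (c*x / (1 + c*x))^k))"
    by (simp add: power_divide)
  also have "(-1)^k * (c*x / (1 + c*x))^k = (- (c*x / (1 + c*x)))^k"
    by (rule power_minus[symmetric])
  finally show ?thesis .
qed

lemma norm_sq_binomial_powr_cis:
  assumes cx: "0 < 1 + c*x"
  shows "(cmod (of_real ((1 + c*x) powr a) * (1 + of_real (- (c*x / (1 + c*x))) * cis t) powr (of_real a)))^2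
       = (1 + c * (quad_var c x * chord_sq t)) powr a"
proof -
  define z where "z = 1 + of_real (- (c*x / (1 + c*x))) * cis t"
  have "(1 + c*x) * cmod z = cmod (of_real (1 + c*x) * z)"
    using cx by (simp only: norm_mult norm_of_real abs_of_pos)
  also have "of_real (1 + c*x) * z = of_real (1 + c*x) - of_real ((1 + c*x) * (c*x / (1 + c*x))) * cis t"
    by (simp add: z_def algebra_simps)
  also have "(1 + c*x) * (c*x / (1 + c*x)) = c*x" using cx by simp
  finally have z: "(1 + c*x) * cmod z = cmod (of_real (1 + c*x) - of_real (c*x) * cis t)" .
  have "cmod (of_real ((1 + c*x) powr a) * z powr (of_real a)) = ((1 + c*x) * cmod z) powr a"
    using cx by (simp add: norm_mult norm_powr_real_powr' powr_mult)
  then show ?thesis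
    unfolding z_def[symmetric] z by (simp only: power2_powr norm_sq_affine_cis)
qed

lemma sums_p_sq_powr:
  assumes "0 < n" "0 < c" "0 \<le> x"
  shows "(\<lambda>k. (p n c k x)^2) sums circle_mean (\<lambda>t. (1 + c * (quad_var c x * chord_sq t)) powr (- n/c))"
proof -
  define m w B where "m = n/c" and "w = c*x / (1 + c*x)" and "B = (1 + c*x) powr (- m)"
  have cx: "0 < 1 + c*x" using assms by (simp add: add_pos_nonneg)
  have w: "0 \<le> w" "w < 1" using assms cx by (auto simp: w_def)
  define a where "a k = p n c k x" for k
  have a_eq: "a k = B * (((- m) gchoose k) * (- w)^k)" for k
    using p_eq_gbinomial_term[OF assms(2) cx] by (simp add: a_def B_def m_def w_def)
  have "0 \<le> a k" for k
  proof -
    have "a k = B * (((-1)^k * ((- m) gchoose k)) * w^k)"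
      by (simp add: a_eq power_minus[of w] mult_ac)
    then show ?thesis
      using neg_one_power_mult_gbinomial_nonneg[of m k] assms w by (simp add: B_def m_def)
  qed
  moreover have "(\<lambda>k. ((- m) gchoose k) * (- w)^k) sums (1 + (- w)) powr (- m)"
    using w by (intro gen_binomial_real) simp
  then have "summable a"
    unfolding a_eq by (intro summable_mult sums_summable)
  ultimately have "summable (\<lambda>k. \<bar>a k\<bar>)" by simp
  moreover define F where "F t = of_real B * (1 + of_real (- w) * cis t) powr (of_real (- m) :: complex)" for t
  have "(\<lambda>k. of_real (a k) * cis (real k * t)) sums F t" for t
  proof -
    have "norm (of_real (- w) * cis t :: complex) < 1" using w by (simp add: norm_mult)
    then have "(\<lambda>k. (of_real (- m) gchoose k) * (of_real (- w) * cis t)^k) sums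
        (1 + of_real (- w) * cis t) powr (of_real (- m) :: complex)"
      by (rule gen_binomial_complex)
    then have "(\<lambda>k. of_real B * ((of_real (- m) gchoose k) * (of_real (- w) * cis t)^k)) sums F t"
      unfolding F_def by (rule sums_mult)
    moreover have "(of_real (- m) gchoose k :: complex) = of_real ((- m) gchoose k)" for k
      by (simp add: gbinomial_prod_rev)
    ultimately show ?thesis
      unfolding power_of_real_mult_cis a_eq by (simp add: mult_ac)
  qed
  ultimately have "(\<lambda>k. (a k)^2) sums circle_mean (\<lambda>t. (cmod (F t))^2)"
    by (rule sums_square_circle_mean)
  then show ?thesis
    using norm_sq_binomial_powr_cis[OF cx, of "- m"] by (simp add: F_def B_def w_def a_def m_def)
qed

lemma tsallis_representation_powr:
  assumes "0 < n" "0 < c"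
  shows "tsallis_representation n c (\<lambda>v. (1 + c * v) powr (- n/c))
           (\<lambda>v. - n * (1 + c * v) powr (- n/c - 1)) (\<lambda>v. n * (n + c) * (1 + c * v) powr (- n/c - 2))
           {x. 0 < 1 + 2*c*x} {v. 0 < 1 + c * v}"
proof -
  note kernel = tsallis_kernel_powr[OF assms]
  show ?thesis
    using kernel
  proof (rule tsallis_representation.intro, unfold_locales)
    show "Ic c \<subseteq> {x. 0 < 1 + 2*c*x}"
      using assms by (auto simp: Ic_def intro: add_pos_nonneg)
    fix x assume "x \<in> Ic c"
    then show "(\<lambda>k. (p n c k x)^2) sums
        tsallis_kernel.collision c (\<lambda>v. (1 + c * v) powr (- n/c)) x"
      unfolding tsallis_kernel.collision_eq[OF kernel] using sums_p_sq_powr[OF assms, of x] assms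
      by (simp add: Ic_def)
  qed
qed

lemma tsallis_kernel_power:
  assumes "0 < n" "c < 0" and n_eq: "n = - c * real l"
  shows "tsallis_kernel n c (\<lambda>v. (1 + c * v)^l) (\<lambda>v. - n * (1 + c * v)^(l - 1))
           (\<lambda>v. n * (n + c) * (1 + c * v)^(l - 2)) UNIV UNIV"
proof
  have "l \<noteq> 0"
  proof
    assume "l = 0"
    then show False using assms by simp
  qed
  then obtain j where l: "l = Suc j" by (cases l) auto
  have nc: "n + c = - c * real j" using n_eq l by (simp add: algebra_simps)
  then have "0 \<le> n + c" using assms(2) by (simp add: mult_nonpos_nonneg)
  fix v :: real
  show "((\<lambda>v. (1 + c * v)^l) has_real_derivative - n * (1 + c * v)^(l - 1)) (at v)"
    using n_eq by (auto intro!: derivative_eq_intros)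
  show "((\<lambda>v. - n * (1 + c * v)^(l - 1)) has_real_derivative n * (n + c) * (1 + c * v)^(l - 2)) (at v)"
  proof (rule DERIV_cong[OF DERIV_cmult])
    show "((\<lambda>v. (1 + c * v)^k) has_real_derivative real k * (1 + c * v)^(k - 1) * c) (at v)" for k
      by (auto intro!: derivative_eq_intros)
  qed (simp add: nc l numeral_2_eq_2)
  show "(1 + c * v) * (- n * (1 + c * v)^(l - 1)) = - n * (1 + c * v)^l"
    by (simp add: l)
  show "(1 + c * v) * (n * (n + c) * (1 + c * v)^(l - 2)) = - (n + c) * (- n * (1 + c * v)^(l - 1))"
    unfolding nc l by (cases j) auto
  show "0 < 1 + c * v \<Longrightarrow> - n * (1 + c * v)^(l - 1) < 0"
    using assms(1) by (simp add: zero_less_mult_iff)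
  show "0 \<le> 1 + c * v \<Longrightarrow> - n * (1 + c * v)^(l - 1) \<le> 0 \<and> 0 \<le> n * (n + c) * (1 + c * v)^(l - 2)"
    using assms(1) \<open>0 \<le> n + c\<close> by simp
qed (use assms in \<open>auto intro!: continuous_intros\<close>)

lemma sums_p_sq_power:
  assumes "c < 0" "n = - c * real l"
  shows "(\<lambda>k. (p n c k x)^2) sums circle_mean (\<lambda>t. (1 + c * (quad_var c x * chord_sq t))^l)"
proof -
  define a where "a k = real (l choose k) * (- c*x)^k * (1 + c*x)^(l - k)" for k
  have "- n/c = real l" using assms by (simp add: field_simps)
  then have p_eq: "p n c k x = a k" for k
  proof (cases "k \<le> l")
    case True
    then have "(1 + c*x) powi (int l - int k) = (1 + c*x)^(l - k)"
      by (simp add: power_int_of_nat[symmetric])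
    then show ?thesis
      using assms True \<open>- n/c = real l\<close>
      by (simp add: p_def a_def binomial_gbinomial power_minus[of "c*x"] mult_ac)
  next
    case False
    then show ?thesis
      using assms \<open>- n/c = real l\<close> by (simp add: p_def a_def binomial_gbinomial[symmetric])
  qed
  have a_zero: "a k = 0" if "k \<notin> {..l}" for k
    using that by (simp add: a_def)
  have "summable (\<lambda>k. \<bar>a k\<bar>)"
    using a_zero by (intro sums_summable[OF sums_finite[OF finite_atMost]]) auto
  moreover define F where "F t = (of_real (1 + c*x) - of_real (c*x) * cis t :: complex)^l" for t
  have "(\<lambda>k. of_real (a k) * cis (real k * t)) sums F t" for t
  proof -
    have "F t = (of_real (- c*x) * cis t + of_real (1 + c*x))^l"
      by (simp add: F_def)
    also have "\<dots> = (\<Sum>k\<le>l. of_real (a k) * cis (real k * t))"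
      unfolding binomial_ring power_of_real_mult_cis by (simp add: a_def mult_ac)
    finally show ?thesis
      using sums_finite[OF finite_atMost, of l "\<lambda>k. of_real (a k) * cis (real k * t)"] a_zero
      by simp
  qed
  ultimately have "(\<lambda>k. (a k)^2) sums circle_mean (\<lambda>t. (cmod (F t))^2)"
    by (rule sums_square_circle_mean)
  moreover have "(cmod (F t))^2 = (1 + c * (quad_var c x * chord_sq t))^l" for t
    by (simp add: F_def norm_power flip: power_mult norm_sq_affine_cis) (simp add: mult.commute)
  ultimately show ?thesis by (simp add: p_eq)
qed

lemma tsallis_representation_power:
  assumes "0 < n" "c < 0" "n = - c * real l"
  shows "tsallis_representation n c (\<lambda>v. (1 + c * v)^l) (\<lambda>v. - n * (1 + c * v)^(l - 1))
           (\<lambda>v. n * (n + c) * (1 + c * v)^(l - 2)) UNIV UNIV"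
proof -
  note kernel = tsallis_kernel_power[OF assms]
  show ?thesis
    using kernel
  proof (rule tsallis_representation.intro, unfold_locales)
    fix x
    show "(\<lambda>k. (p n c k x)^2) sums tsallis_kernel.collision c (\<lambda>v. (1 + c * v)^l) x"
      unfolding tsallis_kernel.collision_eq[OF kernel] by (rule sums_p_sq_power[OF assms(2,3)])
  qed simp
qed

lemma tsallis_representation_exists:
  assumes "0 < n" and "c < 0 \<Longrightarrow> \<exists>l::nat. n = - c * real l"
  shows "\<exists>psi psi' psi'' J V. tsallis_representation n c psi psi' psi'' J V"
proof (cases c "0::real" rule: linorder_cases)
  case less
  then obtain l where "n = - c * real l" using assms(2) by blast
  then show ?thesis using tsallis_representation_power[OF assms(1) less] by blast
next
  case equal
  then show ?thesis using tsallis_representation_exp[OF assms(1)] by blast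
next
  case greater
  then show ?thesis using tsallis_representation_powr[OF assms(1)] by blast
qed

theorem theorem4p2:
  fixes n c :: real
  assumes npos: "n > 0"
    and cnonneg: "c \<ge> 0 \<Longrightarrow> n > c"
    and cneg: "c < 0 \<Longrightarrow> \<exists>l::nat. n = - c * real l"
  shows "concave_on (Ic c) (T n c)
    \<and> (c \<ge> 0 \<longrightarrow> strict_mono_on {0..} (T n c))
    \<and> (c < 0 \<longrightarrow> strict_mono_on {0 .. -1/(2*c)} (T n c)
                 \<and> strict_antimono_on {-1/(2*c) .. -1/c} (T n c))
    \<and> (\<exists>u1 u2. \<forall>x\<in>Ic c.
          (T n c has_real_derivative u1 x) (at x within Ic c)
        \<and> (u1 has_real_derivative u2 x) (at x within Ic c)
        \<and> x*(1+c*x)*(1+2*c*x) * u2 x + (4*(n+c)*x*(1+c*x) + 1) * u1 x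
            + 2*n*(1+2*c*x) * T n c x = 2*n*(1+2*c*x))"
proof -
  obtain psi psi' psi'' J V where "tsallis_representation n c psi psi' psi'' J V"
    using tsallis_representation_exists[OF npos cneg] by blast
  then interpret tsallis_representation n c psi psi' psi'' J V .
  show ?thesis
    using concave_on_T strict_mono_on_T strict_mono_on_T_neg T_ode by blast
qed

end
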